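(* Let $F$ be an algebraically closed field of characteristic $\neq 2$, $R=F[t]$ with the involution ${}^*$ described in the context, and let $A\in M_2(R)$ satisfy $A^*=-A$, $\det(A)\neq 0$ and $\gcd(A)=1$. Then $A$ is congruent to a matrix with zero diagonal, i.e. there is $S\in\mathrm{GL}_2(R)$ such that both diagonal entries of $S^*AS$ are $0$.
   Context: $R=F[t]$ is the polynomial ring over $F$, and ${}^*$ is the $F$-algebra involution of $R$ that is the identity on $F$ and sends $t$ to $-t$. For $A=(a_{ij})\in M_n(R)$, $A^*$ is the matrix whose $(i,j)$ entry is $a_{ji}^*$. $A$ is skew-hermitian if $A^*=-A$. Congruence: $B=S^*AS$ for some $S\in\mathrm{GL}_n(R)$. $\gcd(A)$ denotes the monic generator (or $0$) of the ideal of $R$ generated by all entries of $A$. *)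

theory Defs
  imports "HOL-Analysis.Analysis" "HOL-Computational_Algebra.Polynomial_Factorial"
begin

definition poly_inv :: "'a::comm_ring_1 poly \<Rightarrow> 'a poly" where
  "poly_inv p = pcompose p [:0, -1:]"

definition mat_star :: "'a::comm_ring_1 poly ^ 'n ^ 'm \<Rightarrow> 'a poly ^ 'm ^ 'n" where
  "mat_star A = (\<chi> i j. poly_inv (A $ j $ i))"

definition alg_closed_field :: "'a::field itself \<Rightarrow> bool" where
  "alg_closed_field _ \<longleftrightarrow> (\<forall>p::'a poly. degree p \<ge> 1 \<longrightarrow> (\<exists>x. poly p x = 0))"

end

theory Submission
  imports Defs
begin

(* A congruence with zero diagonal is the same as a basis (of determinant 1) consisting of
   isotropic vectors for the form h(v, w) = v* A w.

   If det A is a nonzero constant, the Euclidean algorithm applied to the (1,1) entry, performed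
   by congruences, produces a unimodular isotropic vector v. Completing v to a basis (v, w), the
   identity h(v,v) h(w,w) - h(v,w) h(w,v) = det A forces h(v,w) to be a constant, and adding a
   suitable multiple of v to w makes w isotropic as well (here 2 must be invertible).

   In general P = det A is even with P(0) <> 0, so over an algebraically closed field
   P = c beta beta* with beta and beta* coprime. Since the entries of A have no common root,
   there is a unimodular w with A w = 0 modulo P. In a basis (v, w), rescaling v by beta* turns h
   into P times a form C of constant determinant. An isotropic vector of C whose second
   coordinate is prime to beta* yields a unimodular isotropic s for A such that h(s,t) is prime
   to its conjugate for any completion (s, t), and again t can be corrected to be isotropic. *)

section \<open>The involution\<close>

lemma poly_inv_add [simp]: "poly_inv (p + q) = poly_inv p + poly_inv q"
  by (simp add: poly_inv_def pcompose_add)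

lemma poly_inv_mult [simp]: "poly_inv (p * q) = poly_inv p * poly_inv q"
  by (simp add: poly_inv_def pcompose_mult)

lemma poly_inv_minus [simp]: "poly_inv (- p) = - poly_inv p"
  by (simp add: poly_inv_def pcompose_uminus)

lemma poly_inv_diff [simp]: "poly_inv (p - q) = poly_inv p - poly_inv q"
  by (simp add: poly_inv_def pcompose_diff)

lemma poly_inv_const [simp]: "poly_inv [:c:] = [:c:]"
  by (simp add: poly_inv_def)

lemma poly_inv_0 [simp]: "poly_inv 0 = 0"
  by (simp add: poly_inv_def)

lemma poly_inv_1 [simp]: "poly_inv 1 = 1"
  by (simp add: poly_inv_def pcompose_1)

lemma poly_inv_smult [simp]: "poly_inv (smult c p) = smult c (poly_inv p)"
  by (simp add: poly_inv_def pcompose_smult)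

lemma poly_inv_sum [simp]: "poly_inv (\<Sum>i\<in>I. f i) = (\<Sum>i\<in>I. poly_inv (f i))"
  by (induction I rule: infinite_finite_induct) simp_all

lemma poly_inv_prod [simp]: "poly_inv (\<Prod>i\<in>I. f i) = (\<Prod>i\<in>I. poly_inv (f i))"
  by (induction I rule: infinite_finite_induct) simp_all

lemma poly_inv_of_int [simp]: "poly_inv (of_int k) = of_int k"
  by (metis of_int_poly poly_inv_const)

lemma poly_inv_poly_inv [simp]: "poly_inv (poly_inv p) = p"
  by (simp add: poly_inv_def pcompose_assoc [symmetric] pcompose_pCons)

lemma poly_poly_inv [simp]: "poly (poly_inv p) x = poly p (- x)"
  by (simp add: poly_inv_def poly_pcompose)

lemma degree_poly_inv [simp]: "degree (poly_inv (p :: 'a::idom poly)) = degree p"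
  by (simp add: poly_inv_def degree_pcompose)

lemma poly_inv_eq_0_iff [simp]: "poly_inv p = 0 \<longleftrightarrow> p = 0"
  by (metis poly_inv_0 poly_inv_poly_inv)

lemma poly_inv_linear [simp]: "poly_inv [:a, b:] = [:a, - b:]"
  by (simp add: poly_inv_def pcompose_pCons)

lemma poly_0_eq_0_if_poly_inv_eq_uminus:
  fixes p :: "'a::idom poly"
  assumes "(2::'a) \<noteq> 0" "poly_inv p = - p"
  shows "poly p 0 = 0"
proof -
  have "poly p 0 = - poly p 0"
    using arg_cong [OF assms(2), of "\<lambda>p. poly p 0"] by simp
  then have "2 * poly p 0 = 0" by (metis mult_2 add_eq_0_iff2)
  with assms(1) show ?thesis by simp
qed

lemma degree_mult_poly_inv: "degree (p * poly_inv p) = 2 * degree (p :: 'a::idom poly)"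
  by (cases "p = 0") (simp_all add: degree_mult_eq)

lemma degree_eq_0_if_mult_poly_inv_const:
  fixes p :: "'a::idom poly"
  shows "p * poly_inv p = [:c:] \<Longrightarrow> degree p = 0"
  using degree_mult_poly_inv [of p] by simp

lemma degree_lt_if_mult_add_norm_const:
  fixes x a r :: "'a::idom poly"
  assumes "x * a + poly_inv r * r = [:k:]" "degree r < degree a"
  shows "degree x < degree a"
proof (cases "x = 0")
  case True
  then show ?thesis using assms(2) by simp
next
  case False
  have "a \<noteq> 0" using assms(2) by auto
  have "x * a = [:k:] - poly_inv r * r" using assms(1) by (simp add: algebra_simps)
  then have "degree x + degree a \<le> max (degree [:k:]) (degree (poly_inv r * r))"
    using False \<open>a \<noteq> 0\<close> by (metis degree_diff_le_max degree_mult_eq)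
  also have "\<dots> = 2 * degree r"
    using degree_mult_poly_inv [of r] by (simp add: mult.commute)
  finally show ?thesis using assms(2) by linarith
qed

section \<open>Coprimality over an algebraically closed field\<close>

lemma coprime_iff_bezout:
  fixes a b :: "'a::euclidean_ring_gcd"
  shows "coprime a b \<longleftrightarrow> (\<exists>u v. u * a + v * b = 1)"
proof
  assume "coprime a b"
  then show "\<exists>u v. u * a + v * b = 1"
    using bezout_coefficients_fst_snd [of a b] by (auto simp: coprime_iff_gcd_eq_1)
next
  assume "\<exists>u v. u * a + v * b = 1"
  then obtain u v where uv: "u * a + v * b = 1" by blast
  show "coprime a b"
  proof (rule coprimeI)
    fix c assume "c dvd a" "c dvd b"
    then have "c dvd u * a + v * b" by simp
    then show "is_unit c" using uv by simp
  qed
qed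

lemma alg_closed_field_coprime_iff:
  fixes p q :: "'a::field_gcd poly"
  assumes "alg_closed_field TYPE('a)"
  shows "coprime p q \<longleftrightarrow> (\<forall>z. poly p z \<noteq> 0 \<or> poly q z \<noteq> 0)"
proof
  assume "coprime p q"
  then show "\<forall>z. poly p z \<noteq> 0 \<or> poly q z \<noteq> 0" using coprime_poly_0 by blast
next
  assume no_common_root: "\<forall>z. poly p z \<noteq> 0 \<or> poly q z \<noteq> 0"
  show "coprime p q"
  proof (rule ccontr)
    assume "\<not> coprime p q"
    then have "\<not> is_unit (gcd p q)" by (metis is_unit_gcd)
    moreover have "gcd p q \<noteq> 0" using no_common_root by auto
    ultimately have "degree (gcd p q) \<noteq> 0" using is_unit_iff_degree by blast
    then have "degree (gcd p q) \<ge> 1" by simp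
    then obtain z where "poly (gcd p q) z = 0"
      using assms unfolding alg_closed_field_def by blast
    then have "poly p z = 0" "poly q z = 0"
      by (metis dvd_trans gcd_dvd1 gcd_dvd2 poly_eq_0_iff_dvd)+
    with no_common_root show False by blast
  qed
qed

lemma alg_closed_field_infinite:
  assumes "alg_closed_field TYPE('a::field)"
  shows "infinite (UNIV :: 'a set)"
proof
  assume fin: "finite (UNIV :: 'a set)"
  define p :: "'a poly" where "p = (\<Prod>c\<in>UNIV. [:- c, 1:]) + 1"
  have "degree (\<Prod>c\<in>UNIV. [:- c, 1:] :: 'a poly) = card (UNIV :: 'a set)"
    by (subst degree_prod_eq_sum_degree) auto
  moreover have "card (UNIV :: 'a set) \<ge> 1"
    using fin by (simp add: Suc_le_eq card_gt_0_iff)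
  ultimately have "degree p \<ge> 1"
    unfolding p_def by (subst degree_add_eq_left) auto
  then obtain z where "poly p z = 0"
    using assms unfolding alg_closed_field_def by blast
  moreover have "poly (\<Prod>c\<in>UNIV. [:- c, 1:]) z = 0"
    unfolding poly_prod using fin by (intro prod_zero) auto
  ultimately show False
    unfolding p_def by simp
qed

lemma alg_closed_field_exists_coprime_translate:
  fixes p q \<gamma> :: "'a::field_gcd poly"
  assumes ac: "alg_closed_field TYPE('a)" and "coprime p q" "\<gamma> \<noteq> 0"
  obtains e where "coprime (p + smult e q) \<gamma>"
proof -
  have no_common_root: "poly p z \<noteq> 0 \<or> poly q z \<noteq> 0" for z
    using \<open>coprime p q\<close> alg_closed_field_coprime_iff [OF ac] by blast
  define bad where "bad = (\<lambda>z. - poly p z / poly q z) ` {z. poly \<gamma> z = 0}"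
  have "finite bad"
    unfolding bad_def using poly_roots_finite [OF \<open>\<gamma> \<noteq> 0\<close>] by simp
  then obtain e where e: "e \<notin> bad"
    using ex_new_if_finite [OF alg_closed_field_infinite [OF ac]] by blast
  have "poly (p + smult e q) z \<noteq> 0" if "poly \<gamma> z = 0" for z
  proof (cases "poly q z = 0")
    case True
    then show ?thesis using no_common_root [of z] by simp
  next
    case False
    have "e \<noteq> - poly p z / poly q z"
      using e that unfolding bad_def by auto
    then have "e * poly q z \<noteq> - poly p z"
      using False by (simp add: field_simps)
    then have "poly p z + e * poly q z \<noteq> 0"
      by (metis add.commute eq_neg_iff_add_eq_0)
    then show ?thesis by simp
  qed
  then have "coprime (p + smult e q) \<gamma>"
    unfolding alg_closed_field_coprime_iff [OF ac] by blast
  then show thesis by (rule that)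
qed

section \<open>Norms of even polynomials\<close>

lemma even_poly_split_opposite_roots:
  fixes P :: "'a::field poly"
  assumes "poly_inv P = P" "poly P \<tau> = 0" "\<tau> + \<tau> \<noteq> 0"
  obtains Q where "P = [:- \<tau>, 1:] * [:\<tau>, 1:] * Q" "poly_inv Q = Q"
proof -
  define L where "L = [:- \<tau>, 1:] * [:\<tau>, 1:]"
  obtain P1 where P1: "P = [:- \<tau>, 1:] * P1"
    using assms(2) by (auto simp: poly_eq_0_iff_dvd elim: dvdE)
  have "poly P (- \<tau>) = 0"
    using assms(2) arg_cong [OF assms(1), of "\<lambda>p. poly p \<tau>"] by simp
  then have "poly P1 (- \<tau>) = 0"
    using assms(3) unfolding P1 by (simp add: add.commute)
  then obtain Q where "P1 = [:\<tau>, 1:] * Q"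
    using poly_eq_0_iff_dvd [of P1 "- \<tau>"] by (auto elim: dvdE)
  with P1 have P: "P = L * Q"
    unfolding L_def by (simp only: mult.assoc)
  have "poly_inv [:- \<tau>, 1:] = - [:\<tau>, 1:]" "poly_inv [:\<tau>, 1:] = - [:- \<tau>, 1:]"
    by simp_all
  then have "poly_inv L = L"
    unfolding L_def by (simp only: poly_inv_mult mult_minus_left mult_minus_right minus_minus mult.commute)
  then have "L * poly_inv Q = L * Q"
    using assms(1) unfolding P by (simp only: poly_inv_mult)
  moreover have "L \<noteq> 0"
    unfolding L_def mult_eq_0_iff by simp
  ultimately have "poly_inv Q = Q" by simp
  with P show thesis
    unfolding L_def by (rule that)
qed

lemma coprime_poly_inv_linear_mult:
  fixes \<beta> :: "'a::field_gcd poly"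
  assumes "alg_closed_field TYPE('a)" "\<tau> + \<tau> \<noteq> 0"
    and "coprime \<beta> (poly_inv \<beta>)" "poly \<beta> (- \<tau>) \<noteq> 0"
  shows "coprime ([:- \<tau>, 1:] * \<beta>) (poly_inv ([:- \<tau>, 1:] * \<beta>))"
  unfolding alg_closed_field_coprime_iff [OF assms(1)]
proof
  fix z
  have L: "poly ([:- \<tau>, 1:] * \<beta>) x = (x - \<tau>) * poly \<beta> x" for x
    by (simp add: algebra_simps)
  have \<beta>: "poly \<beta> z \<noteq> 0 \<or> poly \<beta> (- z) \<noteq> 0"
    using assms(3) unfolding alg_closed_field_coprime_iff [OF assms(1)] by simp
  show "poly ([:- \<tau>, 1:] * \<beta>) z \<noteq> 0 \<or> poly (poly_inv ([:- \<tau>, 1:] * \<beta>)) z \<noteq> 0"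
  proof (cases "z = \<tau>")
    case True
    then show ?thesis using assms(2,4) L [of "- z"] by (simp add: add_eq_0_iff2)
  next
    case False
    then show ?thesis
      using \<beta> assms(4) L [of z] L [of "- z"] by (auto simp: add_eq_0_iff2)
  qed
qed

lemma norm_factorization_step:
  fixes \<beta> Q :: "'a::field_gcd poly"
  assumes ac: "alg_closed_field TYPE('a)" and two_\<tau>: "\<tau> + \<tau> \<noteq> 0"
    and norm: "\<beta> * poly_inv \<beta> = smult l Q" and cop: "coprime \<beta> (poly_inv \<beta>)"
  obtains \<beta>' where "\<beta>' * poly_inv \<beta>' = smult (- l) ([:- \<tau>, 1:] * [:\<tau>, 1:] * Q)"
    and "coprime \<beta>' (poly_inv \<beta>')"
proof -
  define L1 L2 where "L1 = [:- \<tau>, 1:]" and "L2 = [:\<tau>, 1:]"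
  have L1: "poly_inv L1 = - L2" and L2: "poly_inv L2 = - L1"
    unfolding L1_def L2_def by simp_all
  show thesis
  proof (cases "poly \<beta> (- \<tau>) = 0")
    case True
    then have "poly \<beta> (- (- \<tau>)) \<noteq> 0"
      using cop alg_closed_field_coprime_iff [OF ac] by force
    moreover have "- \<tau> + - \<tau> \<noteq> 0"
      using two_\<tau> by (metis minus_add_distrib neg_equal_0_iff_equal)
    ultimately have "coprime ([:- (- \<tau>), 1:] * \<beta>) (poly_inv ([:- (- \<tau>), 1:] * \<beta>))"
      using coprime_poly_inv_linear_mult [OF ac _ cop] by blast
    then have "coprime (L2 * \<beta>) (poly_inv (L2 * \<beta>))"
      unfolding L2_def by (simp only: minus_minus)
    moreover have "L2 * \<beta> * poly_inv (L2 * \<beta>) = smult (- l) (L1 * L2 * Q)"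
      using norm by (simp add: L2 algebra_simps)
    ultimately show thesis
      using that unfolding L1_def L2_def by blast
  next
    case False
    then have "coprime (L1 * \<beta>) (poly_inv (L1 * \<beta>))"
      using coprime_poly_inv_linear_mult [OF ac two_\<tau> cop] unfolding L1_def by simp
    moreover have "L1 * \<beta> * poly_inv (L1 * \<beta>) = smult (- l) (L1 * L2 * Q)"
      using norm by (simp add: L1 algebra_simps)
    ultimately show thesis
      using that unfolding L1_def L2_def by blast
  qed
qed

lemma even_poly_norm_factorization:
  fixes P :: "'a::field_gcd poly"
  assumes ac: "alg_closed_field TYPE('a)" and two: "(2::'a) \<noteq> 0"
    and "poly_inv P = P" "poly P 0 \<noteq> 0"
  shows "\<exists>\<beta> l. l \<noteq> 0 \<and> \<beta> * poly_inv \<beta> = smult l P \<and> coprime \<beta> (poly_inv \<beta>)"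
  using assms(3,4)
proof (induction "degree P" arbitrary: P rule: less_induct)
  case less
  show ?case
  proof (cases "degree P = 0")
    case True
    then obtain c where "P = [:c:]" by (rule degree_eq_zeroE)
    moreover have "c \<noteq> 0" using less.prems(2) calculation by simp
    ultimately show ?thesis
      by (intro exI [of _ 1] exI [of _ "1 / c"]) (simp add: one_pCons)
  next
    case False
    then have "degree P \<ge> 1" by simp
    then obtain \<tau> where root: "poly P \<tau> = 0"
      using ac unfolding alg_closed_field_def by blast
    have "\<tau> \<noteq> 0" using root less.prems(2) by auto
    then have two_\<tau>: "\<tau> + \<tau> \<noteq> 0"
      using two by (metis mult_2 mult_eq_0_iff)
    obtain Q where P: "P = [:- \<tau>, 1:] * [:\<tau>, 1:] * Q" and Q: "poly_inv Q = Q"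
      using even_poly_split_opposite_roots [OF less.prems(1) root two_\<tau>] .
    have "Q \<noteq> 0" using less.prems(2) P by auto
    then have "degree P = degree [:- \<tau>, 1:] + degree [:\<tau>, 1:] + degree Q"
      unfolding P by (simp add: degree_mult_eq del: mult_pCons_left mult_pCons_right)
    then have "degree Q < degree P" by simp
    moreover have "poly Q 0 \<noteq> 0" using less.prems(2) P by simp
    ultimately obtain \<beta> l where "l \<noteq> 0" and norm: "\<beta> * poly_inv \<beta> = smult l Q"
      and cop: "coprime \<beta> (poly_inv \<beta>)"
      using less.hyps Q by blast
    obtain \<beta>' where "\<beta>' * poly_inv \<beta>' = smult (- l) P" "coprime \<beta>' (poly_inv \<beta>')"
      using norm_factorization_step [OF ac two_\<tau> norm cop] unfolding P .
    with \<open>l \<noteq> 0\<close> show ?thesis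
      by (metis neg_equal_0_iff_equal)
  qed
qed

lemma coprime_poly_inv_if_dvd_norm:
  fixes \<beta> \<gamma> :: "'a::field_gcd poly"
  assumes "\<beta> * poly_inv \<beta> = smult l (\<gamma> * poly_inv \<gamma>)" "poly_inv \<beta> dvd poly_inv \<gamma>"
    and "coprime \<beta> (poly_inv \<beta>)"
  shows "coprime \<gamma> (poly_inv \<gamma>)"
proof -
  obtain m where m: "poly_inv \<gamma> = poly_inv \<beta> * m"
    using assms(2) by (rule dvdE)
  then have \<gamma>: "\<gamma> = \<beta> * poly_inv m"
    by (metis poly_inv_mult poly_inv_poly_inv)
  have "\<beta> \<noteq> 0"
    using assms(3) by auto
  have norm_\<gamma>: "\<gamma> * poly_inv \<gamma> = \<beta> * poly_inv \<beta> * (m * poly_inv m)"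
    unfolding \<gamma> by (simp add: mult_ac)
  have "\<beta> * poly_inv \<beta> \<noteq> 0"
    using \<open>\<beta> \<noteq> 0\<close> by simp
  moreover have "\<beta> * poly_inv \<beta> * 1 = \<beta> * poly_inv \<beta> * smult l (m * poly_inv m)"
    using assms(1) unfolding norm_\<gamma> mult_smult_right mult_1_right .
  ultimately have one: "smult l (m * poly_inv m) = 1"
    using mult_left_cancel by (metis (no_types))
  then have "l \<noteq> 0" by auto
  have "m * poly_inv m = smult (1 / l) (smult l (m * poly_inv m))"
    using \<open>l \<noteq> 0\<close> by simp
  also have "\<dots> = [:1 / l:]"
    unfolding one by (simp add: one_pCons)
  finally have "m * poly_inv m = [:1 / l:]" .
  then have "degree m = 0" "m \<noteq> 0"
    using degree_eq_0_if_mult_poly_inv_const \<open>l \<noteq> 0\<close> by auto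
  then have "is_unit m" "is_unit (poly_inv m)"
    using is_unit_iff_degree [of m] is_unit_iff_degree [of "poly_inv m"] by simp_all
  then have "coprime \<beta> m" "coprime (poly_inv m) (poly_inv \<beta>)" "coprime (poly_inv m) m"
    by (simp_all add: is_unit_left_imp_coprime is_unit_right_imp_coprime)
  then show ?thesis
    using assms(3) unfolding \<gamma> by simp
qed

section \<open>The skew-hermitian form\<close>

lemma mat_star_nth [simp]: "mat_star A $ i $ j = poly_inv (A $ j $ i)"
  by (simp add: mat_star_def)

lemma mat_star_mat_star [simp]: "mat_star (mat_star A) = A"
  by (simp add: vec_eq_iff)

lemma mat_star_matrix_matrix_mult: "mat_star (A ** B) = mat_star B ** mat_star A"
  by (simp add: matrix_matrix_mult_def vec_eq_iff mult.commute)

lemma det_mat_star: "det (mat_star A) = poly_inv (det A)"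
proof -
  have "mat_star A = transpose (\<chi> i j. poly_inv (A $ i $ j))"
    by (simp add: vec_eq_iff transpose_def)
  then have "det (mat_star A) = det (\<chi> i j. poly_inv (A $ i $ j))"
    by (simp only: det_transpose)
  then show ?thesis
    by (simp add: det_def)
qed

lemma poly_inv_entry_skew:
  assumes "mat_star A = - A"
  shows "poly_inv (A $ i $ j) = - A $ j $ i"
  using arg_cong [OF assms, of "\<lambda>B. B $ j $ i"] by simp

lemma poly_inv_det_skew_2:
  fixes A :: "'a::comm_ring_1 poly ^ 2 ^ 2"
  assumes "mat_star A = - A"
  shows "poly_inv (det A) = det A"
proof -
  have "poly_inv (det A) = det (- A)"
    by (simp add: det_mat_star [symmetric] assms)
  then show ?thesis
    by (simp add: det_2)
qed

definition sform :: "'a::comm_ring_1 poly ^ 'n ^ 'n \<Rightarrow> 'a poly ^ 'n \<Rightarrow> 'a poly ^ 'n \<Rightarrow> 'a poly"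
  where "sform A v w = (\<Sum>i\<in>UNIV. poly_inv (v $ i) * (A *v w) $ i)"

lemma sform_add_left [simp]: "sform A (u + v) w = sform A u w + sform A v w"
  by (simp add: sform_def distrib_right sum.distrib)

lemma sform_add_right [simp]: "sform A v (u + w) = sform A v u + sform A v w"
  by (simp add: sform_def matrix_vector_right_distrib distrib_left sum.distrib)

lemma sform_scale_left [simp]: "sform A (c *s v) w = poly_inv c * sform A v w"
  by (simp add: sform_def sum_distrib_left mult.assoc)

lemma sform_scale_right [simp]: "sform A v (c *s w) = c * sform A v w"
  by (simp add: sform_def matrix_vector_mult_def sum_distrib_left algebra_simps)

lemma sform_uminus_matrix [simp]: "sform (- A) v w = - sform A v w"
  by (simp add: sform_def matrix_vector_mult_def sum_negf)

lemma sform_combination: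
  "sform A (a *s v + b *s w) (a *s v + b *s w)
     = poly_inv a * a * sform A v v + poly_inv a * b * sform A v w
       + poly_inv b * a * sform A w v + poly_inv b * b * sform A w w"
  by (simp add: algebra_simps)

lemma poly_inv_sform: "poly_inv (sform A v w) = sform (mat_star A) w v"
proof -
  have "poly_inv (sform A v w)
      = (\<Sum>i\<in>UNIV. \<Sum>j\<in>UNIV. poly_inv (w $ j) * (poly_inv (A $ i $ j) * v $ i))"
    by (simp add: sform_def matrix_vector_mult_def sum_distrib_left sum_distrib_right mult_ac)
  also have "\<dots> = (\<Sum>j\<in>UNIV. \<Sum>i\<in>UNIV. poly_inv (w $ j) * (poly_inv (A $ i $ j) * v $ i))"
    by (rule sum.swap)
  also have "\<dots> = sform (mat_star A) w v"
    by (simp add: sform_def matrix_vector_mult_def sum_distrib_left)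
  finally show ?thesis .
qed

lemma sform_swap_skew:
  assumes "mat_star A = - A"
  shows "sform A w v = - poly_inv (sform A v w)"
  by (simp add: poly_inv_sform assms)

lemma poly_inv_sform_diag_skew:
  assumes "mat_star A = - A"
  shows "poly_inv (sform A v v) = - sform A v v"
  using sform_swap_skew [OF assms, of v v] by (metis minus_minus)

lemma sform_matrix_vector_mult_right: "sform A v (S *v w) = sform (A ** S) v w"
  by (simp add: sform_def matrix_vector_mul_assoc)

lemma sform_matrix_vector_mult_left:
  fixes A S :: "'a::comm_ring_1 poly ^ 'n ^ 'n"
  shows "sform A (S *v v) w = sform (mat_star S ** A) v w"
  by (metis poly_inv_poly_inv poly_inv_sform sform_matrix_vector_mult_right
      mat_star_matrix_matrix_mult mat_star_mat_star)

lemma sform_congruence: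
  fixes A S :: "'a::comm_ring_1 poly ^ 'n ^ 'n"
  shows "sform A (S *v v) (S *v w) = sform (mat_star S ** A ** S) v w"
  by (simp add: sform_matrix_vector_mult_left sform_matrix_vector_mult_right matrix_mul_assoc)

lemma matrix_vector_mult_axis: "S *v axis j 1 = column j S"
  by (simp add: vec_eq_iff matrix_vector_mult_def axis_def column_def if_distrib cong: if_cong)

lemma sform_axis_left:
  fixes A :: "'a::comm_ring_1 poly ^ 'n ^ 'n"
  shows "sform A (axis i 1) w = (A *v w) $ i"
proof -
  have "poly_inv (axis i 1 $ k) * x = (if k = i then x else 0)" for k and x :: "'a poly"
    by (simp add: axis_def)
  then show ?thesis
    by (simp add: sform_def)
qed

lemma sform_axis: "sform A (axis i 1) (axis j 1) = A $ i $ j"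
  by (simp add: sform_axis_left matrix_vector_mult_axis column_def)

lemma congruence_nth:
  fixes A S :: "'a::comm_ring_1 poly ^ 'n ^ 'n"
  shows "(mat_star S ** A ** S) $ i $ j = sform A (column i S) (column j S)"
  by (simp add: sform_congruence sform_axis flip: matrix_vector_mult_axis)

lemma skew_congruence:
  fixes A S :: "'a::comm_ring_1 poly ^ 'n ^ 'n"
  assumes "mat_star A = - A"
  shows "mat_star (mat_star S ** A ** S) = - (mat_star S ** A ** S)"
proof -
  have "poly_inv (sform A (column j S) (column i S)) = - sform A (column i S) (column j S)" for i j
    using sform_swap_skew [OF assms, of "column i S" "column j S"] by simp
  then show ?thesis
    by (simp add: vec_eq_iff congruence_nth)
qed

lemma det_congruence:
  fixes A S :: "'a::comm_ring_1 poly ^ 'n ^ 'n"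
  shows "det (mat_star S ** A ** S) = poly_inv (det S) * det A * det S"
  by (simp add: det_mul det_mat_star)

lemma dvd_sform: "(\<And>i. d dvd (A *v w) $ i) \<Longrightarrow> d dvd sform A v w"
  by (simp add: sform_def dvd_sum)

lemma sform_2:
  fixes A :: "'a::comm_ring_1 poly ^ 2 ^ 2"
  shows "sform A v w = poly_inv (v $ 1) * (A $ 1 $ 1 * w $ 1 + A $ 1 $ 2 * w $ 2)
                     + poly_inv (v $ 2) * (A $ 2 $ 1 * w $ 1 + A $ 2 $ 2 * w $ 2)"
  by (simp add: sform_def matrix_vector_mult_def sum_2)

definition wedge :: "'a::comm_ring_1 ^ 2 \<Rightarrow> 'a ^ 2 \<Rightarrow> 'a"
  where "wedge v w = v $ 1 * w $ 2 - v $ 2 * w $ 1"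

lemma wedge_matrix_vector_mult: "wedge (S *v v) (S *v w) = det S * wedge v w"
  by (simp add: wedge_def det_2 matrix_vector_mult_def sum_2 algebra_simps)

lemma wedge_add_scale_right [simp]: "wedge v (w + c *s v) = wedge v w"
  by (simp add: wedge_def algebra_simps)

lemma wedge_linear_combination:
  "wedge (a *s v + b *s w) (c *s v + d *s w) = (a * d - b * c) * wedge v w"
  by (simp add: wedge_def algebra_simps)

lemma coprime_iff_wedge_eq_1:
  fixes v :: "'a::euclidean_ring_gcd ^ 2"
  shows "coprime (v $ 1) (v $ 2) \<longleftrightarrow> (\<exists>w. wedge v w = 1)"
proof
  assume "coprime (v $ 1) (v $ 2)"
  then obtain x y where "x * v $ 1 + y * v $ 2 = 1" by (auto simp: coprime_iff_bezout)
  then have "wedge v (vector [- y, x]) = 1" by (simp add: wedge_def algebra_simps)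
  then show "\<exists>w. wedge v w = 1" ..
next
  assume "\<exists>w. wedge v w = 1"
  then obtain w where "wedge v w = 1" ..
  then have "w $ 2 * v $ 1 + (- w $ 1) * v $ 2 = 1" by (simp add: wedge_def algebra_simps)
  then show "coprime (v $ 1) (v $ 2)" unfolding coprime_iff_bezout by blast
qed

lemma sform_det_2:
  fixes A :: "'a::comm_ring_1 poly ^ 2 ^ 2"
  shows "sform A v v * sform A w w - sform A v w * sform A w v
           = poly_inv (wedge v w) * wedge v w * det A"
  by (simp add: sform_2 wedge_def det_2 algebra_simps)

lemma invertible_if_det_eq_1_2:
  fixes S :: "'a::comm_ring_1 ^ 2 ^ 2"
  assumes "det S = 1"
  shows "invertible S"
  unfolding invertible_def
proof (intro exI conjI)
  define T :: "'a ^ 2 ^ 2" where "T = vector [vector [S $ 2 $ 2, - S $ 1 $ 2], vector [- S $ 2 $ 1, S $ 1 $ 1]]"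
  show "S ** T = mat 1" "T ** S = mat 1"
    using assms by (simp_all add: T_def vec_eq_iff forall_2 matrix_matrix_mult_def sum_2 mat_def det_2
        algebra_simps)
qed

section \<open>Isotropic vectors for a unimodular form\<close>

lemma isotropic_partner:
  fixes A :: "'a::field_gcd poly ^ 'n ^ 'n"
  assumes "(2::'a) \<noteq> 0" "mat_star A = - A" "sform A v v = 0"
    and "coprime (sform A v w) (poly_inv (sform A v w))"
  obtains c where "sform A (w + c *s v) (w + c *s v) = 0"
proof -
  define g e where "g = sform A v w" and "e = sform A w w"
  obtain x y where xy: "x * g + y * poly_inv g = 1"
    using assms(4) unfolding g_def coprime_iff_bezout by blast
  have e_odd: "poly_inv e = - e"
    unfolding e_def by (rule poly_inv_sform_diag_skew [OF assms(2)])
  have wv: "sform A w v = - poly_inv g"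
    unfolding g_def by (rule sform_swap_skew [OF assms(2)])
  define h :: "'a poly" where "h = [:1 / 2:]"
  have h: "poly_inv h = h" "h + h = 1"
    using assms(1) by (simp_all add: h_def one_pCons field_simps)
  \<comment> \<open>the cross terms of the expansion are \<open>c\<^sup>* g - c g\<^sup>*\<close>; this choice of \<open>c\<close> makes them \<open>- e\<close>\<close>
  define c where "c = h * e * (poly_inv x + y)"
  have "sform A (w + c *s v) (w + c *s v) = e - c * poly_inv g + poly_inv c * g"
    using assms(3) by (simp add: wv flip: e_def g_def)
  also have "\<dots> = e - h * e * ((x * g + y * poly_inv g) + poly_inv (x * g + y * poly_inv g))"
    by (simp add: c_def e_odd h algebra_simps)
  also have "\<dots> = e - (h + h) * e"
    unfolding xy by (simp add: algebra_simps)
  also have "\<dots> = 0"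
    by (simp add: h)
  finally show thesis by (rule that)
qed

lemma euclidean_step_congruence:
  fixes A :: "'a::field poly ^ 2 ^ 2"
  assumes "(2::'a) \<noteq> 0" "mat_star A = - A" "det A = [:k:]" "A $ 1 $ 1 \<noteq> 0"
  obtains S where "det S = 1" "degree ((mat_star S ** A ** S) $ 1 $ 1) < degree (A $ 1 $ 1)"
proof -
  define a b where "a = A $ 1 $ 1" and "b = A $ 1 $ 2"
  have a_odd: "poly_inv a = - a" and A21: "A $ 2 $ 1 = - poly_inv b"
    using poly_inv_entry_skew [OF assms(2)] unfolding a_def b_def by (simp, metis minus_minus)
  have "degree a \<noteq> 0"
  proof
    assume "degree a = 0"
    then obtain c where "a = [:c:]" by (rule degree_eq_zeroE)
    with poly_0_eq_0_if_poly_inv_eq_uminus [OF assms(1) a_odd] assms(4) show False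
      by (simp add: a_def)
  qed
  \<comment> \<open>the congruence by \<open>S\<close> performs the division step \<open>b = a q + r\<close> on the first row\<close>
  define q r where "q = b div a" and "r = b mod a"
  have b: "b = a * q + r" unfolding q_def r_def by simp
  have "degree r < degree a"
    using degree_mod_less [OF assms(4) [folded a_def], of b] \<open>degree a \<noteq> 0\<close> unfolding r_def by auto
  define S :: "'a poly ^ 2 ^ 2" where "S = vector [vector [q, 1], vector [- 1, 0]]"
  define B where "B = mat_star S ** A ** S"
  have det_S: "det S = 1" by (simp add: S_def det_2)
  have "B $ 2 $ 2 = a" "B $ 1 $ 2 = poly_inv r"
    unfolding B_def congruence_nth sform_2 using a_odd A21 b
    by (simp_all add: S_def column_def a_def b_def algebra_simps)
  moreover have "B $ 2 $ 1 = - r"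
    using poly_inv_entry_skew [OF skew_congruence [OF assms(2), of S], of 1 2] calculation(2)
    by (simp add: B_def)
  moreover have "det B = [:k:]"
    unfolding B_def det_congruence det_S using assms(3) by simp
  ultimately have "B $ 1 $ 1 * a + poly_inv r * r = [:k:]"
    by (simp add: det_2)
  then have "degree (B $ 1 $ 1) < degree (A $ 1 $ 1)"
    using degree_lt_if_mult_add_norm_const \<open>degree r < degree a\<close> unfolding a_def by blast
  with det_S show thesis
    unfolding B_def by (rule that)
qed

lemma isotropic_unimodular_vector_const_det:
  fixes A :: "'a::field poly ^ 2 ^ 2"
  assumes "(2::'a) \<noteq> 0" "mat_star A = - A" "det A = [:k:]"
  shows "\<exists>v w. wedge v w = 1 \<and> sform A v v = 0"
  using assms(2,3)
proof (induction "degree (A $ 1 $ 1)" arbitrary: A rule: less_induct)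
  case less
  show ?case
  proof (cases "A $ 1 $ 1 = 0")
    case True
    have "wedge (axis 1 1) (axis 2 1) = 1"
      by (simp add: wedge_def axis_def)
    moreover have "sform A (axis 1 1) (axis 1 1) = 0"
      using True by (simp add: sform_axis)
    ultimately show ?thesis by blast
  next
    case False
    then obtain S where det_S: "det S = 1"
      and "degree ((mat_star S ** A ** S) $ 1 $ 1) < degree (A $ 1 $ 1)"
      using euclidean_step_congruence [OF assms(1) less.prems] by blast
    moreover have "mat_star (mat_star S ** A ** S) = - (mat_star S ** A ** S)"
      "det (mat_star S ** A ** S) = [:k:]"
      using skew_congruence [OF less.prems(1)] less.prems(2) det_S
      by (simp_all add: det_congruence)
    ultimately obtain v w where "wedge v w = 1" "sform (mat_star S ** A ** S) v v = 0"
      using less.hyps by blast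
    then have "wedge (S *v v) (S *v w) = 1" "sform A (S *v v) (S *v v) = 0"
      by (simp_all add: wedge_matrix_vector_mult det_S sform_congruence)
    then show ?thesis by blast
  qed
qed

lemma isotropic_basis_const_det:
  fixes A :: "'a::field_gcd poly ^ 2 ^ 2"
  assumes "(2::'a) \<noteq> 0" "mat_star A = - A" "det A = [:k:]" "k \<noteq> 0"
  shows "\<exists>v w c. wedge v w = 1 \<and> sform A v v = 0 \<and> sform A w w = 0 \<and> sform A v w = [:c:]"
proof -
  obtain v w where vw: "wedge v w = 1" and v: "sform A v v = 0"
    using isotropic_unimodular_vector_const_det [OF assms(1-3)] by blast
  define g where "g = sform A v w"
  have "g * poly_inv g = [:k:]"
    using sform_det_2 [of A v w] v vw assms(3) sform_swap_skew [OF assms(2), of w v]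
    unfolding g_def by simp
  then obtain c where g: "g = [:c:]"
    using degree_eq_0_if_mult_poly_inv_const degree_eq_zeroE by blast
  with \<open>g * poly_inv g = [:k:]\<close> assms(4) have "is_unit g"
    using is_unit_iff_degree [of g] by auto
  then have "coprime g (poly_inv g)" by (rule is_unit_left_imp_coprime)
  then obtain d where "sform A (w + d *s v) (w + d *s v) = 0"
    using isotropic_partner [OF assms(1,2) v] unfolding g_def by blast
  moreover have "wedge v (w + d *s v) = 1" "sform A v (w + d *s v) = [:c:]"
    using vw v g unfolding g_def by simp_all
  ultimately show ?thesis using v by blast
qed

lemma isotropic_vector_coprime_to:
  fixes A :: "'a::field_gcd poly ^ 2 ^ 2"
  assumes ac: "alg_closed_field TYPE('a)" and "(2::'a) \<noteq> 0" "mat_star A = - A"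
    and "det A = [:k:]" "k \<noteq> 0" "\<gamma> \<noteq> 0"
  shows "\<exists>v w. wedge v w = 1 \<and> sform A v v = 0 \<and> coprime (v $ 2) \<gamma>"
proof -
  obtain v1 v2 c where basis: "wedge v1 v2 = 1" and iso: "sform A v1 v1 = 0" "sform A v2 v2 = 0"
    and pair: "sform A v1 v2 = [:c:]"
    using isotropic_basis_const_det [OF assms(2-5)] by blast
  have "sform A v2 v1 = - [:c:]"
    using sform_swap_skew [OF assms(3), of v2 v1] pair by simp
  \<comment> \<open>the pairing being constant, every constant combination of \<open>v1\<close> and \<open>v2\<close> is isotropic\<close>
  then have iso_e: "sform A (v1 + [:e:] *s v2) (v1 + [:e:] *s v2) = 0" for e
    using iso pair by simp
  have wedge_e: "wedge (v1 + [:e:] *s v2) v2 = 1" for e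
    using basis by (simp add: wedge_def algebra_simps)
  have "(- v2 $ 1) * v1 $ 2 + v1 $ 1 * v2 $ 2 = 1"
    using basis by (simp add: wedge_def algebra_simps)
  then have "coprime (v1 $ 2) (v2 $ 2)"
    unfolding coprime_iff_bezout by blast
  then obtain e where "coprime (v1 $ 2 + smult e (v2 $ 2)) \<gamma>"
    using alg_closed_field_exists_coprime_translate [OF ac _ \<open>\<gamma> \<noteq> 0\<close>] by blast
  then have "coprime ((v1 + [:e:] *s v2) $ 2) \<gamma>"
    by simp
  then show ?thesis
    using iso_e wedge_e by blast
qed

section \<open>Reduction of the general case to a unimodular form\<close>

lemma no_common_root_if_Gcd_entries_eq_1:
  fixes A :: "'a::field_gcd poly ^ 'n ^ 'm"
  assumes "Gcd {A $ i $ j | i j. True} = 1"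
  shows "\<exists>i j. poly (A $ i $ j) z \<noteq> 0"
proof (rule ccontr)
  assume "\<not> (\<exists>i j. poly (A $ i $ j) z \<noteq> 0)"
  then have "[:- z, 1:] dvd Gcd {A $ i $ j | i j. True}"
    by (auto intro!: Gcd_greatest simp: poly_eq_0_iff_dvd)
  then have "is_unit [:- z, 1:]"
    using assms by simp
  then show False
    using is_unit_iff_degree [of "[:- z, 1:]"] by simp
qed

lemma poly_det_0_neq_0_skew:
  fixes A :: "'a::field_gcd poly ^ 2 ^ 2"
  assumes "(2::'a) \<noteq> 0" "mat_star A = - A" "\<And>z. \<exists>i j. poly (A $ i $ j) z \<noteq> 0"
  shows "poly (det A) 0 \<noteq> 0"
proof
  assume "poly (det A) 0 = 0"
  have diagonal: "poly (A $ i $ i) 0 = 0" for i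
    by (rule poly_0_eq_0_if_poly_inv_eq_uminus [OF assms(1) poly_inv_entry_skew [OF assms(2)]])
  have A21: "A $ 2 $ 1 = - poly_inv (A $ 1 $ 2)"
    using poly_inv_entry_skew [OF assms(2), of 1 2] by (metis minus_minus)
  have "poly (A $ 1 $ 2) 0 * poly (A $ 1 $ 2) 0 = 0"
    using \<open>poly (det A) 0 = 0\<close> diagonal [of 1] diagonal [of 2] by (simp add: det_2 A21)
  then have "poly (A $ i $ j) 0 = 0" for i j
    using diagonal exhaust_2 [of i] exhaust_2 [of j] by (auto simp: A21)
  with assms(3) show False by blast
qed

definition kernel_vector :: "'a::comm_ring_1 poly ^ 2 ^ 2 \<Rightarrow> 'a \<Rightarrow> 'a poly ^ 2"
  where "kernel_vector A k = vector [A $ 2 $ 2 - A $ 1 $ 2 * [:k:], poly_inv (A $ 1 $ 2) + A $ 1 $ 1 * [:k:]]"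

lemma matrix_vector_mult_kernel_vector:
  assumes "mat_star A = - A"
  shows "A *v kernel_vector A k = det A *s vector [1, [:k:]]"
proof -
  have "A $ 2 $ 1 = - poly_inv (A $ 1 $ 2)"
    using poly_inv_entry_skew [OF assms, of 1 2] by (metis minus_minus)
  then show ?thesis
    by (simp add: vec_eq_iff forall_2 matrix_vector_mult_def sum_2 kernel_vector_def det_2 algebra_simps)
qed

lemma exists_coprime_kernel_vector:
  fixes A :: "'a::field_gcd poly ^ 2 ^ 2"
  assumes ac: "alg_closed_field TYPE('a)" and skew: "mat_star A = - A" and "det A \<noteq> 0"
    and no_common_root: "\<And>z. \<exists>i j. poly (A $ i $ j) z \<noteq> 0"
  obtains k where "coprime (kernel_vector A k $ 1) (kernel_vector A k $ 2)"
proof -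
  define a b d where "a = A $ 1 $ 1" and "b = A $ 1 $ 2" and "d = A $ 2 $ 2"
  have A21: "A $ 2 $ 1 = - poly_inv b"
    using poly_inv_entry_skew [OF skew, of 1 2] unfolding b_def by (metis minus_minus)
  have det: "det A = a * d + b * poly_inv b"
    by (simp add: det_2 A21 flip: a_def b_def d_def)
  \<comment> \<open>at a root of \<open>det A\<close>, at most one constant \<open>k\<close> makes both entries vanish\<close>
  define f where "f z = (if poly b z \<noteq> 0 then poly d z / poly b z else - poly b (- z) / poly a z)" for z
  have "finite (f ` {z. poly (det A) z = 0})"
    using poly_roots_finite [OF \<open>det A \<noteq> 0\<close>] by simp
  then obtain k where k: "k \<notin> f ` {z. poly (det A) z = 0}"
    using ex_new_if_finite [OF alg_closed_field_infinite [OF ac]] by blast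
  have w: "kernel_vector A k = vector [d - b * [:k:], poly_inv b + a * [:k:]]"
    by (simp add: kernel_vector_def a_def b_def d_def)
  have "coprime (kernel_vector A k $ 1) (kernel_vector A k $ 2)"
    unfolding alg_closed_field_coprime_iff [OF ac]
  proof (intro allI disjCI)
    fix z
    assume "\<not> poly (kernel_vector A k $ 2) z \<noteq> 0"
    then have b_z: "poly b (- z) = - poly a z * k"
      by (simp add: w add_eq_0_iff2)
    show "poly (kernel_vector A k $ 1) z \<noteq> 0"
    proof
      assume "poly (kernel_vector A k $ 1) z = 0"
      then have d_z: "poly d z = poly b z * k"
        by (simp add: w)
      then have "poly (det A) z = 0"
        using b_z by (simp add: det algebra_simps)
      then have "k \<noteq> f z"
        using k by blast
      then have "poly b z = 0" "poly a z = 0"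
        using d_z b_z by (auto simp: f_def split: if_splits)
      then have "poly (A $ i $ j) z = 0" for i j
        using d_z b_z exhaust_2 [of i] exhaust_2 [of j]
        by (auto simp: A21 simp flip: a_def b_def d_def)
      with no_common_root show False by blast
    qed
  qed
  then show thesis by (rule that)
qed

lemma kernel_basis_gram:
  fixes A :: "'a::field_gcd poly ^ 2 ^ 2"
  assumes ac: "alg_closed_field TYPE('a)" and skew: "mat_star A = - A" and "det A \<noteq> 0"
    and no_common_root: "\<And>z. \<exists>i j. poly (A $ i $ j) z \<noteq> 0"
  obtains v w \<theta> \<eta> where "wedge v w = 1" "\<And>p. det A dvd sform A p w"
    "sform A v w = det A * \<theta>" "sform A w w = det A * \<eta>" "poly_inv \<eta> = - \<eta>"
    "sform A v v * \<eta> + det A * (\<theta> * poly_inv \<theta>) = 1"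
proof -
  define P where "P = det A"
  have "P \<noteq> 0" and P_even: "poly_inv P = P"
    using \<open>det A \<noteq> 0\<close> poly_inv_det_skew_2 [OF skew] unfolding P_def by simp_all
  obtain k where "coprime (kernel_vector A k $ 1) (kernel_vector A k $ 2)"
    using exists_coprime_kernel_vector [OF ac skew \<open>det A \<noteq> 0\<close> no_common_root] .
  then obtain u where "wedge (kernel_vector A k) u = 1"
    using coprime_iff_wedge_eq_1 by blast
  define v w where "v = - u" and "w = kernel_vector A k"
  have vw: "wedge v w = 1"
    using \<open>wedge (kernel_vector A k) u = 1\<close> by (simp add: v_def w_def wedge_def algebra_simps)
  have P_dvd: "P dvd sform A p w" for p
    unfolding P_def w_def by (rule dvd_sform) (simp add: matrix_vector_mult_kernel_vector [OF skew])
  then obtain \<theta> \<eta> where \<theta>: "sform A v w = P * \<theta>" and \<eta>: "sform A w w = P * \<eta>"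
    by (meson dvdE)
  have "P * poly_inv \<eta> = P * (- \<eta>)"
    using poly_inv_sform_diag_skew [OF skew, of w] \<eta> P_even by simp
  then have \<eta>_odd: "poly_inv \<eta> = - \<eta>"
    by (rule mult_left_cancel [OF \<open>P \<noteq> 0\<close>, THEN iffD1])
  have "sform A w v = - (P * poly_inv \<theta>)"
    using sform_swap_skew [OF skew, of w v] \<theta> P_even by simp
  then have "P * (sform A v v * \<eta> + P * (\<theta> * poly_inv \<theta>)) = P * 1"
    using sform_det_2 [of A v w] vw unfolding \<theta> \<eta> P_def [symmetric] by (simp add: algebra_simps)
  then have "sform A v v * \<eta> + P * (\<theta> * poly_inv \<theta>) = 1"
    using \<open>P \<noteq> 0\<close> by simp
  with vw P_dvd \<theta> \<eta> \<eta>_odd show thesis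
    unfolding P_def by (rule that)
qed

lemma rescaled_gram_skew_det:
  fixes q \<theta> \<eta> \<beta> :: "'a::field poly"
  assumes "poly_inv q = - q" "poly_inv \<eta> = - \<eta>" "q * \<eta> + P * (\<theta> * poly_inv \<theta>) = 1"
    and "\<beta> * poly_inv \<beta> = smult l P"
  defines "C \<equiv> vector [vector [smult l q, \<beta> * \<theta>], vector [- poly_inv (\<beta> * \<theta>), \<eta>]] :: 'a poly ^ 2 ^ 2"
  shows "mat_star C = - C" "det C = [:l:]"
proof -
  show "mat_star C = - C"
    by (simp add: vec_eq_iff forall_2 C_def assms(1,2))
  have "det C = smult l (q * \<eta>) + (\<beta> * poly_inv \<beta>) * (\<theta> * poly_inv \<theta>)"
    by (simp add: C_def det_2 algebra_simps)
  also have "\<dots> = smult l (q * \<eta> + P * (\<theta> * poly_inv \<theta>))"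
    by (simp add: assms(4) algebra_simps smult_add_right)
  finally show "det C = [:l:]"
    by (simp add: assms(3) one_pCons)
qed

lemma unimodular_reduction:
  fixes A :: "'a::field_gcd poly ^ 2 ^ 2"
  assumes ac: "alg_closed_field TYPE('a)" and skew: "mat_star A = - A" and "det A \<noteq> 0"
    and no_common_root: "\<And>z. \<exists>i j. poly (A $ i $ j) z \<noteq> 0"
    and norm: "\<beta> * poly_inv \<beta> = smult l (det A)"
  shows "\<exists>v w (C :: 'a poly ^ 2 ^ 2). wedge v w = 1 \<and> (\<forall>p. det A dvd sform A p w)
           \<and> mat_star C = - C \<and> det C = [:l:]
           \<and> (\<forall>z. sform A ((poly_inv \<beta> * z $ 1) *s v + z $ 2 *s w) ((poly_inv \<beta> * z $ 1) *s v + z $ 2 *s w)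
                  = det A * sform C z z)"
proof -
  define P where "P = det A"
  obtain v w \<theta> \<eta> where vw: "wedge v w = 1" and P_dvd: "\<And>p. P dvd sform A p w"
    and \<theta>: "sform A v w = P * \<theta>" and \<eta>: "sform A w w = P * \<eta>" and \<eta>_odd: "poly_inv \<eta> = - \<eta>"
    and unimodular: "sform A v v * \<eta> + P * (\<theta> * poly_inv \<theta>) = 1"
    using kernel_basis_gram [OF ac skew \<open>det A \<noteq> 0\<close> no_common_root] unfolding P_def by metis
  define q where "q = sform A v v"
  have wv: "sform A w v = - (P * poly_inv \<theta>)"
    using sform_swap_skew [OF skew, of w v] \<theta> poly_inv_det_skew_2 [OF skew] by (simp add: P_def)
  \<comment> \<open>in the basis \<open>(\<beta>\<^sup>* v, w)\<close> the Gram matrix of \<open>A\<close> is \<open>P\<close> times \<open>C\<close>\<close>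
  define C :: "'a poly ^ 2 ^ 2"
    where "C = vector [vector [smult l q, \<beta> * \<theta>], vector [- poly_inv (\<beta> * \<theta>), \<eta>]]"
  have "mat_star C = - C" "det C = [:l:]"
    using rescaled_gram_skew_det [OF poly_inv_sform_diag_skew [OF skew] \<eta>_odd unimodular norm [folded P_def]]
    unfolding C_def q_def by blast+
  moreover have "sform A ((poly_inv \<beta> * z $ 1) *s v + z $ 2 *s w) ((poly_inv \<beta> * z $ 1) *s v + z $ 2 *s w)
      = P * sform C z z" for z
  proof -
    define c where "c = poly_inv \<beta> * z $ 1"
    have "poly_inv c * c = \<beta> * poly_inv \<beta> * (poly_inv (z $ 1) * z $ 1)"
      by (simp add: c_def mult_ac)
    then have c: "poly_inv c * c = smult l P * (poly_inv (z $ 1) * z $ 1)"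
      unfolding norm P_def .
    have "sform A (c *s v + z $ 2 *s w) (c *s v + z $ 2 *s w)
        = poly_inv c * c * q + poly_inv c * z $ 2 * (P * \<theta>)
          + poly_inv (z $ 2) * c * (- (P * poly_inv \<theta>)) + poly_inv (z $ 2) * z $ 2 * (P * \<eta>)"
      unfolding sform_combination q_def \<theta> \<eta> wv ..
    also have "\<dots> = P * sform C z z"
      unfolding c by (simp add: c_def sform_2 C_def algebra_simps)
    finally show ?thesis
      unfolding c_def .
  qed
  ultimately show ?thesis
    using vw P_dvd unfolding P_def by blast
qed

section \<open>Isotropic bases\<close>

lemma isotropic_vector_pairing_divisible:
  fixes A :: "'a::field_gcd poly ^ 2 ^ 2"
  assumes ac: "alg_closed_field TYPE('a)" and two: "(2::'a) \<noteq> 0" and skew: "mat_star A = - A"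
    and "det A \<noteq> 0" and no_common_root: "\<And>z. \<exists>i j. poly (A $ i $ j) z \<noteq> 0"
    and norm: "\<beta> * poly_inv \<beta> = smult l (det A)" and "l \<noteq> 0"
  shows "\<exists>s t. wedge s t = 1 \<and> sform A s s = 0 \<and> (\<forall>p. poly_inv \<beta> dvd sform A p s)"
proof -
  obtain v w and C :: "'a poly ^ 2 ^ 2" where vw: "wedge v w = 1" and det_dvd: "\<And>p. det A dvd sform A p w"
    and C: "mat_star C = - C" "det C = [:l:]"
    and rescale: "\<And>z. sform A ((poly_inv \<beta> * z $ 1) *s v + z $ 2 *s w) ((poly_inv \<beta> * z $ 1) *s v + z $ 2 *s w)
                   = det A * sform C z z"
    using unimodular_reduction [OF ac skew \<open>det A \<noteq> 0\<close> no_common_root norm] by blast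
  have "poly_inv \<beta> \<noteq> 0"
    using norm \<open>det A \<noteq> 0\<close> \<open>l \<noteq> 0\<close> by auto
  then obtain z z' where zz': "wedge z z' = 1" and z_iso: "sform C z z = 0"
    and z_cop: "coprime (z $ 2) (poly_inv \<beta>)"
    using isotropic_vector_coprime_to [OF ac two C \<open>l \<noteq> 0\<close>] by blast
  define c :: "'a poly ^ 2" where "c = vector [poly_inv \<beta> * z $ 1, z $ 2]"
  define s where "s = c $ 1 *s v + c $ 2 *s w"
  have "sform A s s = 0"
    using rescale [of z] z_iso by (simp add: s_def c_def)
  have "coprime (z $ 1) (z $ 2)"
    using zz' coprime_iff_wedge_eq_1 by blast
  then have "coprime (c $ 1) (c $ 2)"
    using z_cop by (simp add: c_def coprime_commute)
  then obtain r where "wedge c r = 1"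
    using coprime_iff_wedge_eq_1 by blast
  then have "wedge s (r $ 1 *s v + r $ 2 *s w) = 1"
    unfolding s_def wedge_linear_combination vw by (simp add: wedge_def)
  moreover have "poly_inv \<beta> dvd sform A p s" for p
  proof -
    have "det A = smult (inverse l) (\<beta> * poly_inv \<beta>)"
      using norm \<open>l \<noteq> 0\<close> by simp
    then have "poly_inv \<beta> dvd sform A p w"
      using det_dvd [of p] by (metis dvd_smult dvd_trans dvd_triv_right)
    moreover have "sform A p s = poly_inv \<beta> * (z $ 1 * sform A p v) + z $ 2 * sform A p w"
      by (simp add: s_def c_def mult_ac)
    ultimately show ?thesis by simp
  qed
  ultimately show ?thesis
    using \<open>sform A s s = 0\<close> by blast
qed

lemma isotropic_basis:
  fixes A :: "'a::field_gcd poly ^ 2 ^ 2"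
  assumes ac: "alg_closed_field TYPE('a)" and two: "(2::'a) \<noteq> 0" and skew: "mat_star A = - A"
    and "det A \<noteq> 0" and no_common_root: "\<And>z. \<exists>i j. poly (A $ i $ j) z \<noteq> 0"
  shows "\<exists>v w. wedge v w = 1 \<and> sform A v v = 0 \<and> sform A w w = 0"
proof -
  obtain \<beta> l where "l \<noteq> 0" and norm: "\<beta> * poly_inv \<beta> = smult l (det A)"
    and \<beta>: "coprime \<beta> (poly_inv \<beta>)"
    using even_poly_norm_factorization [OF ac two poly_inv_det_skew_2 [OF skew]
        poly_det_0_neq_0_skew [OF two skew no_common_root]] by blast
  obtain s t where st: "wedge s t = 1" and s: "sform A s s = 0"
    and dvd: "\<And>p. poly_inv \<beta> dvd sform A p s"
    using isotropic_vector_pairing_divisible [OF ac two skew \<open>det A \<noteq> 0\<close> no_common_root norm \<open>l \<noteq> 0\<close>]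
    by blast
  define \<gamma> where "\<gamma> = sform A s t"
  have ts: "sform A t s = - poly_inv \<gamma>"
    unfolding \<gamma>_def by (rule sform_swap_skew [OF skew])
  then have "poly_inv \<beta> dvd poly_inv \<gamma>"
    using dvd [of t] by simp
  moreover have "\<gamma> * poly_inv \<gamma> = det A"
    using sform_det_2 [of A s t] s st ts unfolding \<gamma>_def [symmetric] by simp
  ultimately have "coprime \<gamma> (poly_inv \<gamma>)"
    using coprime_poly_inv_if_dvd_norm [OF _ _ \<beta>] norm by metis
  then obtain c where "sform A (t + c *s s) (t + c *s s) = 0"
    using isotropic_partner [OF two skew s] unfolding \<gamma>_def by blast
  moreover have "wedge s (t + c *s s) = 1"
    using st by simp
  ultimately show ?thesis
    using s by blast
qed

theorem proposition3p3:
  fixes A :: "'a::field_gcd poly ^ 2 ^ 2"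
  assumes "alg_closed_field TYPE('a)"
    and "(2::'a) \<noteq> 0"
    and "mat_star A = - A"
    and "det A \<noteq> 0"
    and "Gcd {A $ i $ j | i j. True} = 1"
  shows "\<exists>S :: 'a poly ^ 2 ^ 2. invertible S \<and>
           (\<forall>i. (mat_star S ** A ** S) $ i $ i = 0)"
proof -
  obtain v w where basis: "wedge v w = 1" "sform A v v = 0" "sform A w w = 0"
    using isotropic_basis [OF assms(1-4) no_common_root_if_Gcd_entries_eq_1 [OF assms(5)]] by blast
  define S :: "'a poly ^ 2 ^ 2" where "S = transpose (vector [v, w])"
  have "column 1 S = v" "column 2 S = w"
    by (simp_all add: S_def row_def)
  moreover have "det S = wedge v w"
    by (simp add: S_def transpose_def det_2 wedge_def mult.commute)
  ultimately have "det S = 1" "\<forall>i. (mat_star S ** A ** S) $ i $ i = 0"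
    using basis by (simp_all add: forall_2 congruence_nth)
  then show ?thesis
    using invertible_if_det_eq_1_2 by blast
qed

end
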